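(* Let $m\ge1$, $p\ge0$ be integers and $\alpha$ a positive common divisor of $m$ and $p$. Then $\Lambda^{(\alpha)}(m,p)$ is a finite set and its cardinality is divisible by $m/\alpha$.
   Context: $\Lambda(m,p)=\{(\lambda_i)_{i\in\mathbb Z}: \lambda_i\in\mathbb Z,\ \lambda_1=0,\ \lambda_i\le\lambda_{i+1},\ \lambda_{i+m}=\lambda_i+p \text{ for all } i\}$. For a positive common divisor $\alpha$ of $m$ and $p$ (every positive integer divides $0$), $\Lambda^{(\alpha)}(m,p)=\{\lambda\in\Lambda(m/\alpha,p/\alpha): \lambda\notin\Lambda(m/\alpha',p/\alpha') \text{ for every common divisor } \alpha'>\alpha \text{ of } m,p\}$. *)

theory Defs
  imports Main
begin

definition Lambda :: "nat \<Rightarrow> nat \<Rightarrow> (int \<Rightarrow> int) set" where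
  "Lambda m p = {lam. lam 1 = 0 \<and> (\<forall>i. lam i \<le> lam (i + 1))
                     \<and> (\<forall>i. lam (i + int m) = lam i + int p)}"

definition LambdaAlpha :: "nat \<Rightarrow> nat \<Rightarrow> nat \<Rightarrow> (int \<Rightarrow> int) set" where
  "LambdaAlpha \<alpha> m p = {lam \<in> Lambda (m div \<alpha>) (p div \<alpha>).
      \<forall>\<alpha>'. \<alpha>' dvd m \<and> \<alpha>' dvd p \<and> \<alpha>' > \<alpha> \<longrightarrow> lam \<notin> Lambda (m div \<alpha>') (p div \<alpha>')}"

end

theory Submission
  imports Defs
begin

(* The cardinality of Lambda^(alpha)(m,p) is divisible by n = m/alpha because the cyclic
   group Z/nZ acts freely on it by "rotation".

   For f :: int => int and k :: int let  shift k f  be the renormalised translate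
   i |-> f (i + k) - f (1 + k).  This is an action of Z on normalised functions (f 1 = 0)
   that preserves every Lambda(n,q), hence also Lambda^(alpha)(m,p), and on Lambda(n,q)
   it only depends on k mod n.  If shift d f = f with 0 < d < n, then f has two
   quasi-periods d and n, hence (Bezout) the quasi-period g = gcd d n, a proper divisor of
   n; so f lies in Lambda(m/alpha', p/alpha') for alpha' = alpha * (n/g) > alpha, i.e. f is
   not in Lambda^(alpha)(m,p).  The action is therefore free, all orbits have exactly n
   elements, and n divides the cardinality. *)

text \<open>Orbit counting: if the integers act on a finite set \<open>S\<close> through \<open>Z/nZ\<close> and freely, every
  orbit has exactly \<open>n\<close> elements, so \<open>n\<close> divides \<open>card S\<close>.\<close>
lemma free_cyclic_action_dvd_card:
  fixes act :: "int \<Rightarrow> 'a \<Rightarrow> 'a"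
  assumes fin: "finite S" and n: "n > 0"
    and comp: "\<And>a b x. x \<in> S \<Longrightarrow> act a (act b x) = act (a + b) x"
    and zero: "\<And>x. x \<in> S \<Longrightarrow> act 0 x = x"
    and closed: "\<And>k x. x \<in> S \<Longrightarrow> act k x \<in> S"
    and period: "\<And>k x. x \<in> S \<Longrightarrow> act k x = act (k mod int n) x"
    and free: "\<And>k x. x \<in> S \<Longrightarrow> 0 < k \<Longrightarrow> k < int n \<Longrightarrow> act k x \<noteq> x"
  shows "n dvd card S"
proof -
  define orbit where "orbit x = range (\<lambda>k. act k x)" for x
  have orbit_period: "orbit x = (\<lambda>k. act k x) ` {0..<int n}" if "x \<in> S" for x
    unfolding orbit_def using period[OF that] n
    by (auto intro!: image_eqI[where x = "_ mod int n"])
  have no_collision: "act a x \<noteq> act b x" if "x \<in> S" "0 \<le> a" "a < b" "b < int n" for x a b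
  proof
    assume "act a x = act b x"
    then have "act (- a) (act a x) = act (- a) (act b x)" by simp
    then have "act (b - a) x = x"
      using comp[OF \<open>x \<in> S\<close>] zero[OF \<open>x \<in> S\<close>] by simp
    then show False
      using free[OF \<open>x \<in> S\<close>, of "b - a"] that by simp
  qed
  have card_orbit: "card (orbit x) = n" if "x \<in> S" for x
  proof -
    have "inj_on (\<lambda>k. act k x) {0..<int n}"
      by (rule linorder_inj_onI') (use no_collision[OF that] in auto)
    then show ?thesis
      by (simp add: orbit_period[OF that] card_image)
  qed
  have orbit_of_member: "orbit y = orbit x" if "x \<in> S" "y \<in> orbit x" for x y
  proof -
    obtain a where y: "y = act a x"
      using \<open>y \<in> orbit x\<close> unfolding orbit_def by blast
    have surj: "range (\<lambda>k. k + a) = UNIV"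
      by (rule surjI[of _ "\<lambda>k. k - a"]) simp
    have "orbit y = range (\<lambda>k. act (k + a) x)"
      unfolding orbit_def y using comp[OF that(1)] by simp
    also have "\<dots> = (\<lambda>k. act k x) ` range (\<lambda>k. k + a)"
      by (simp only: image_image)
    also have "\<dots> = orbit x"
      by (simp only: surj orbit_def)
    finally show ?thesis .
  qed
  have "orbit x \<subseteq> S" if "x \<in> S" for x
    using closed[OF that] unfolding orbit_def by blast
  moreover have "x \<in> orbit x" if "x \<in> S" for x
    unfolding orbit_def by (metis zero[OF that] rangeI)
  ultimately have partition: "\<Union> (orbit ` S) = S"
    by blast
  have "n dvd card (\<Union> (orbit ` S))"
  proof (rule dvd_partition)
    show "\<forall>X\<in>orbit ` S. \<forall>Y\<in>orbit ` S. X \<noteq> Y \<longrightarrow> X \<inter> Y = {}"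
      using orbit_of_member by blast
  qed (use fin partition card_orbit in auto)
  with partition show ?thesis by simp
qed

definition quasi_periodic :: "(int \<Rightarrow> int) \<Rightarrow> int \<Rightarrow> int \<Rightarrow> bool" where
  "quasi_periodic f d c \<longleftrightarrow> (\<forall>i. f (i + d) = f i + c)"

lemma quasi_periodic_increment: "quasi_periodic f d c \<Longrightarrow> c = f (i + d) - f i"
  by (simp add: quasi_periodic_def)

lemma quasi_periodic_add:
  "quasi_periodic f d c \<Longrightarrow> quasi_periodic f e b \<Longrightarrow> quasi_periodic f (d + e) (c + b)"
  unfolding quasi_periodic_def by (metis add.assoc)

lemma quasi_periodic_neg: "quasi_periodic f d c \<Longrightarrow> quasi_periodic f (- d) (- c)"
  unfolding quasi_periodic_def by (metis add_diff_cancel diff_conv_add_uminus)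

lemma quasi_periodic_mult:
  assumes per: "quasi_periodic f d c"
  shows "quasi_periodic f (k * d) (k * c)"
proof -
  have nat_multiple: "quasi_periodic f (int j * d) (int j * c)" for j :: nat
  proof (induction j)
    case 0
    then show ?case by (simp add: quasi_periodic_def)
  next
    case (Suc j)
    then show ?case
      using quasi_periodic_add[OF per Suc] by (simp add: algebra_simps)
  qed
  show ?thesis
  proof (cases "k \<ge> 0")
    case True
    then show ?thesis using nat_multiple[of "nat k"] by simp
  next
    case False
    then show ?thesis using quasi_periodic_neg[OF nat_multiple[of "nat (- k)"]] by simp
  qed
qed

lemma quasi_periodic_gcd:
  assumes "quasi_periodic f d c" and "quasi_periodic f e b"
  obtains a where "quasi_periodic f (gcd d e) a"
proof -
  obtain u v where "u * d + v * e = gcd d e"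
    using bezout_int by blast
  then show ?thesis
    using quasi_periodic_add[OF quasi_periodic_mult[OF assms(1)] quasi_periodic_mult[OF assms(2)]]
      that by metis
qed

lemma quasi_periodic_eqI:
  assumes f: "quasi_periodic f n c" and g: "quasi_periodic g n c" and n: "n > 0"
    and agree: "\<And>r. 1 \<le> r \<Longrightarrow> r \<le> n \<Longrightarrow> f r = g r"
  shows "f = g"
proof
  fix i
  define r where "r = (i - 1) mod n + 1"
  define k where "k = (i - 1) div n"
  have i: "i = r + k * n"
    unfolding r_def k_def by (metis add.commute diff_add_cancel mod_div_mult_eq add.assoc)
  have "1 \<le> r" "r \<le> n"
    unfolding r_def using n pos_mod_bound[of n "i - 1"] pos_mod_sign[of n "i - 1"] by linarith+
  then show "f i = g i"
    using i agree quasi_periodic_mult[OF f, of k] quasi_periodic_mult[OF g, of k]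
    by (simp add: quasi_periodic_def)
qed

lemma step_mono_int:
  fixes f :: "int \<Rightarrow> 'a :: order"
  assumes step: "\<And>i. f i \<le> f (i + 1)" and "i \<le> j"
  shows "f i \<le> f j"
  using \<open>i \<le> j\<close>
proof (induction j rule: int_ge_induct)
  case (step j)
  then show ?case using assms(1)[of j] by order
qed simp

lemma Lambda_iff:
  "f \<in> Lambda n q \<longleftrightarrow>
     f 1 = 0 \<and> (\<forall>i. f i \<le> f (i + 1)) \<and> quasi_periodic f (int n) (int q)"
  by (simp add: Lambda_def quasi_periodic_def)

lemma Lambda_mono: "f \<in> Lambda n q \<Longrightarrow> i \<le> j \<Longrightarrow> f i \<le> f j"
  by (rule step_mono_int) (auto simp: Lambda_iff)

lemma Lambda_values:
  assumes f: "f \<in> Lambda n q" and "1 \<le> r" "r \<le> 1 + int n"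
  shows "f r \<in> {0..int q}"
proof -
  have "f 1 = 0" and "f (1 + int n) = f 1 + int q"
    using f by (auto simp: Lambda_iff quasi_periodic_def)
  then show ?thesis
    using Lambda_mono[OF f, of 1 r] Lambda_mono[OF f, of r "1 + int n"] assms by simp
qed

text \<open>\<open>Lambda n q\<close> is finite: restriction to one period is injective into a finite set.\<close>
lemma Lambda_finite:
  assumes "n > 0"
  shows "finite (Lambda n q)"
proof -
  let ?restrict = "\<lambda>f. map f [1..int n]"
  have "inj_on ?restrict (Lambda n q)"
  proof (rule inj_onI)
    fix f g assume "f \<in> Lambda n q" "g \<in> Lambda n q" and eq: "?restrict f = ?restrict g"
    then show "f = g"
      using assms by (intro quasi_periodic_eqI[of f "int n" "int q" g])
        (auto simp: Lambda_iff)
  qed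
  moreover have "?restrict ` Lambda n q \<subseteq> {xs. set xs \<subseteq> {0..int q} \<and> length xs = n}"
    using Lambda_values by fastforce
  then have "finite (?restrict ` Lambda n q)"
    by (rule finite_subset) (simp add: finite_lists_length_eq)
  ultimately show ?thesis
    using finite_image_iff by blast
qed

definition shift :: "int \<Rightarrow> (int \<Rightarrow> int) \<Rightarrow> int \<Rightarrow> int" where
  "shift k f = (\<lambda>i. f (i + k) - f (1 + k))"

lemma shift_shift: "shift a (shift b f) = shift (a + b) f"
  by (simp add: shift_def algebra_simps)

lemma shift_0: "f 1 = 0 \<Longrightarrow> shift 0 f = f"
  by (simp add: shift_def)

lemma shift_fixed_iff: "shift d f = f \<longleftrightarrow> quasi_periodic f d (f (1 + d))"
  by (auto simp: shift_def quasi_periodic_def fun_eq_iff algebra_simps)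

lemma shift_Lambda:
  assumes "f \<in> Lambda n q"
  shows "shift k f \<in> Lambda n q"
proof -
  have step: "f j \<le> f (j + 1)" and per: "f (j + int n) = f j + int q" for j
    using assms by (simp_all add: Lambda_def)
  have "f (i + k) \<le> f (i + 1 + k)" "f (i + int n + k) = f (i + k) + int q" for i
    using step[of "i + k"] per[of "i + k"] by (simp_all add: algebra_simps)
  then show ?thesis
    by (simp add: Lambda_def shift_def)
qed

lemma shift_Lambda_iff:
  assumes "f 1 = 0"
  shows "shift k f \<in> Lambda n q \<longleftrightarrow> f \<in> Lambda n q"
proof
  assume "shift k f \<in> Lambda n q"
  then have "shift (- k) (shift k f) \<in> Lambda n q"
    by (rule shift_Lambda)
  then show "f \<in> Lambda n q"
    using assms by (simp add: shift_shift shift_0)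
qed (rule shift_Lambda)

lemma shift_mod:
  assumes "f \<in> Lambda n q"
  shows "shift k f = shift (k mod int n) f"
proof -
  have "quasi_periodic f (k div int n * int n) (k div int n * int q)"
    using assms by (intro quasi_periodic_mult) (simp add: Lambda_iff)
  then have "f (j + k) = f (j + k mod int n) + k div int n * int q" for j
    unfolding quasi_periodic_def by (metis add.assoc mod_div_mult_eq)
  then show ?thesis
    by (simp add: shift_def)
qed

lemma Lambda_shift_fixed:
  assumes f: "f \<in> Lambda n q" and d: "0 < d" "d < int n" and fixed: "shift d f = f"
  obtains g c t where "t \<ge> 2" "n = g * t" "q = c * t" "f \<in> Lambda g c"
proof -
  have per_n: "quasi_periodic f (int n) (int q)"
    using f by (simp add: Lambda_iff)
  obtain a where per_gcd: "quasi_periodic f (gcd d (int n)) a"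
    using quasi_periodic_gcd[OF fixed[unfolded shift_fixed_iff] per_n] by blast
  define g where "g = gcd (nat d) n"
  have g_int: "int g = gcd d (int n)"
    unfolding g_def using d by (simp add: gcd_int_def)
  have "g \<le> nat d"
    unfolding g_def using d by simp
  have per_g: "quasi_periodic f (int g) a"
    using per_gcd g_int by simp
  have "a = f (1 + int g) - f 1"
    using quasi_periodic_increment[OF per_g] by simp
  then have "a \<ge> 0"
    using Lambda_mono[OF f, of 1 "1 + int g"] by simp
  obtain t where n: "n = g * t"
    unfolding g_def by (metis gcd_dvd2 dvdE)
  have "quasi_periodic f (int n) (int t * a)"
    using quasi_periodic_mult[OF per_g, of "int t"] n by (simp add: mult.commute)
  then have "int q = int t * a"
    using quasi_periodic_increment[OF per_n, of 0] quasi_periodic_increment[of f "int n" _ 0]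
    by simp
  then have "int q = int (nat a * t)"
    using \<open>a \<ge> 0\<close> by simp
  then have q: "q = nat a * t"
    by (simp only: of_nat_eq_iff)
  have "t \<noteq> 0"
    using n d by (metis mult_0_right of_nat_0 less_asym)
  moreover have "t \<noteq> 1"
    using n d \<open>g \<le> nat d\<close> by auto
  ultimately have "t \<ge> 2"
    by arith
  moreover have "f \<in> Lambda g (nat a)"
    using f per_g \<open>a \<ge> 0\<close> by (simp add: Lambda_iff)
  ultimately show ?thesis
    using that n q by blast
qed

lemma shift_LambdaAlpha: "f \<in> LambdaAlpha \<alpha> m p \<Longrightarrow> shift k f \<in> LambdaAlpha \<alpha> m p"
proof -
  assume f: "f \<in> LambdaAlpha \<alpha> m p"
  then have "f 1 = 0"
    by (simp add: LambdaAlpha_def Lambda_iff)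
  with f show ?thesis
    by (simp add: LambdaAlpha_def shift_Lambda_iff)
qed

lemma LambdaAlpha_shift_free:
  assumes "\<alpha> > 0" "\<alpha> dvd m" "\<alpha> dvd p"
    and f: "f \<in> LambdaAlpha \<alpha> m p" and k: "0 < k" "k < int (m div \<alpha>)"
  shows "shift k f \<noteq> f"
proof
  assume fixed: "shift k f = f"
  have "f \<in> Lambda (m div \<alpha>) (p div \<alpha>)"
    using f by (simp add: LambdaAlpha_def)
  then obtain g c t where t: "t \<ge> 2" and n: "m div \<alpha> = g * t" and q: "p div \<alpha> = c * t"
    and fg: "f \<in> Lambda g c"
    using Lambda_shift_fixed k fixed by metis
  define \<alpha>' where "\<alpha>' = \<alpha> * t"
  have m: "m = \<alpha>' * g" and p: "p = \<alpha>' * c"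
    using assms n q unfolding \<alpha>'_def by (metis dvd_mult_div_cancel mult.assoc mult.commute)+
  have "\<alpha>' > \<alpha>"
    unfolding \<alpha>'_def using assms t by simp
  moreover have "\<alpha>' dvd m" "\<alpha>' dvd p"
    using m p by simp_all
  ultimately have "f \<notin> Lambda (m div \<alpha>') (p div \<alpha>')"
    using f by (simp add: LambdaAlpha_def)
  moreover have "m div \<alpha>' = g" "p div \<alpha>' = c"
    using m p \<open>\<alpha>' > \<alpha>\<close> by simp_all
  ultimately show False
    using fg by simp
qed

theorem mainTheorem5:
  fixes m p \<alpha> :: nat
  assumes "m \<ge> 1" and "\<alpha> > 0" and "\<alpha> dvd m" and "\<alpha> dvd p"
  shows "finite (LambdaAlpha \<alpha> m p) \<and> (m div \<alpha>) dvd card (LambdaAlpha \<alpha> m p)"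
proof
  have n: "m div \<alpha> > 0"
    using assms by auto
  have sub: "LambdaAlpha \<alpha> m p \<subseteq> Lambda (m div \<alpha>) (p div \<alpha>)"
    by (auto simp: LambdaAlpha_def)
  show fin: "finite (LambdaAlpha \<alpha> m p)"
    using Lambda_finite[OF n] sub by (rule finite_subset[rotated])
  show "(m div \<alpha>) dvd card (LambdaAlpha \<alpha> m p)"
  proof (rule free_cyclic_action_dvd_card[where act = shift, OF fin n])
    show "shift 0 f = f" if "f \<in> LambdaAlpha \<alpha> m p" for f
      using that sub by (intro shift_0) (auto simp: Lambda_iff)
    show "shift k f = shift (k mod int (m div \<alpha>)) f" if "f \<in> LambdaAlpha \<alpha> m p" for k f
      using that sub by (blast intro: shift_mod)
  qed (use shift_shift shift_LambdaAlpha LambdaAlpha_shift_free assms in auto)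
qed

end
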